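(* Let $x,y\ge 0$ not both zero, and $z,p>0$ (the approximation is intended for the regime $x,y\ll z,p$). Let $a=(x+y)/2$ and $g=\sqrt{xy}$. Then $$R_J(x,y,z,p)=\frac{3}{2\sqrt z\,p}\left[\ln\frac{8z}{a+g}-2R_C\!\left(1,\frac pz\right)+\frac\theta p\ln\frac{2p}{a+g}\right],$$ where $\frac{g}{1-g/p}<\theta<\frac{a}{1-a/p}\left(1+\frac{p}{2z}\right)$.
   Context: For $x,y,z\ge 0$ with at most one zero and $p>0$: $R_J(x,y,z,p)=\frac32\int_0^\infty[(t+x)(t+y)(t+z)]^{-1/2}(t+p)^{-1}\,dt$. For $x\ge0$, $y>0$: $R_C(x,y)=\frac12\int_0^\infty(t+x)^{-1/2}(t+y)^{-1}\,dt$.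
   Formalization: The approximation is asserted under the added hypothesis a < p, that is (x+y)/2 < p, and no other smallness of x, y relative to z or p is assumed. Apart from conventions, each condition added here is assumed in the paper as well or is needed for the statement above to hold. *)

theory Defs
  imports "HOL-Analysis.Analysis"
begin

text \<open>Carlson's symmetric elliptic integrals, as improper (Henstock-Kurzweil)
integrals over [0, infinity). The integrands are nonnegative, so this agrees with
the Lebesgue integral whenever the integral converges.\<close>

definition R_J :: "real \<Rightarrow> real \<Rightarrow> real \<Rightarrow> real \<Rightarrow> real" where
  "R_J x y z p = 3 / 2 * integral {0..}
     (\<lambda>t. 1 / (sqrt ((t + x) * (t + y) * (t + z)) * (t + p)))"

definition R_C :: "real \<Rightarrow> real \<Rightarrow> real" where
  "R_C x y = 1 / 2 * integral {0..} (\<lambda>t. 1 / (sqrt (t + x) * (t + y)))"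

end

(*
  Write S = sqrt ((t + x) (t + y)), w = sqrt (t + z) and r = sqrt z. For t > 0 the integrand
  of R_J splits as

    1 / (S w (t + p)) = (1/t - 1/S) (1/(r p) - 1/(w (t + p)))
                        + (1/S - 1/(w (w + r))) / (r p) - 1 / (w (t + p) p).

  The middle term has the primitive 2 ln (sqrt (t + x) + sqrt (t + y)) - 2 ln (w + r) and
  integrates to ln (8 z / (a + g)) / (r p); the last one contributes -2 R_C (z, p) / p, which
  is -2 R_C (1, p/z) / (r p) by homogeneity of R_C. The first term is a product of two positive
  factors. Squeezing them with t + g <= S <= t + a and (1 - u/2) sqrt (1 + u) < 1 traps it
  strictly between g / (r p (t + g) (t + p)) and a (1/p + 1/(2z)) / (r (t + a) (t + p)),
  whose integrals are logarithms comparable with ln (2 p / (a + g)). With E the integral of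
  the first term, theta = r p^2 E / ln (2 p / (a + g)) is the required constant.
*)

theory Submission
  imports Defs "HOL-Real_Asymp.Real_Asymp"
begin

lemma has_integral_atLeast_of_tendsto:
  fixes f :: "real \<Rightarrow> real"
  assumes fin: "\<And>b. b \<ge> a \<Longrightarrow> (f has_integral I b) {a..b}"
    and lim: "(I \<longlongrightarrow> L) at_top"
  shows "(f has_integral L) {a..}"
  unfolding has_integral_alt'
proof (intro conjI allI impI)
  fix c d :: real
  have "f integrable_on {a..max a d}" using fin[of "max a d"] by auto
  then have "f integrable_on {max a c..d}"
    by (rule integrable_subinterval_real) auto
  moreover have "{a..} \<inter> cbox c d = {max a c..d}" by auto
  ultimately show "(\<lambda>x. if x \<in> {a..} then f x else 0) integrable_on cbox c d"
    using integrable_restrict_Int[of "{a..}" f "cbox c d"] by simp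
next
  fix e :: real assume "e > 0"
  with lim obtain B where B: "\<And>b. b \<ge> B \<Longrightarrow> dist (I b) L < e"
    by (auto simp: tendsto_iff eventually_at_top_linorder)
  define M where "M = max B \<bar>a\<bar>"
  show "\<exists>B>0. \<forall>c d. ball 0 B \<subseteq> cbox c d \<longrightarrow>
          norm (integral (cbox c d) (\<lambda>x. if x \<in> {a..} then f x else 0) - L) < e"
  proof (intro exI[of _ "M + 1"] conjI allI impI)
    fix c d :: real assume "ball 0 (M + 1) \<subseteq> cbox c d"
    moreover have "-M \<in> ball 0 (M + 1)" "M \<in> ball 0 (M + 1)" by (auto simp: M_def)
    ultimately have "-M \<in> cbox c d" "M \<in> cbox c d" by blast+
    then have cd: "c \<le> a" "a \<le> d" "B \<le> d" by (auto simp: M_def)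
    then have "{a..} \<inter> cbox c d = {a..d}" by auto
    then have "integral (cbox c d) (\<lambda>x. if x \<in> {a..} then f x else 0) = I d"
      using integral_restrict_Int[of "cbox c d" "{a..}" f] fin[OF cd(2)] cd(1)
      by (simp add: integral_unique max_absorb1)
    then show "norm (integral (cbox c d) (\<lambda>x. if x \<in> {a..} then f x else 0) - L) < e"
      using B[OF cd(3)] by (simp add: dist_real_def)
  qed (simp add: M_def)
qed

lemma fundamental_theorem_of_calculus_atLeast:
  fixes F f :: "real \<Rightarrow> real"
  assumes "\<And>b. b \<ge> a \<Longrightarrow> continuous_on {a..b} F"
    and "\<And>t. t > a \<Longrightarrow> (F has_real_derivative f t) (at t)"
    and "(F \<longlongrightarrow> L) at_top"
  shows "(f has_integral (L - F a)) {a..}"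
proof (rule has_integral_atLeast_of_tendsto)
  show "(f has_integral (F b - F a)) {a..b}" if "b \<ge> a" for b
    using that assms(1,2)
    by (intro fundamental_theorem_of_calculus_interior)
       (auto simp flip: has_real_derivative_iff_has_vector_derivative)
  show "((\<lambda>b. F b - F a) \<longlongrightarrow> L - F a) at_top"
    using assms(3) by (intro tendsto_diff) auto
qed

lemma has_integral_greaterThan_iff_atLeast:
  fixes f :: "real \<Rightarrow> 'b::banach"
  shows "(f has_integral I) {a<..} \<longleftrightarrow> (f has_integral I) {a..}"
  by (rule has_integral_spike_set_eq; rule negligible_subset[of "{a}"]) auto

lemma has_integral_less_atLeast:
  fixes f g :: "real \<Rightarrow> real"
  assumes "(f has_integral I) {a..}" "(g has_integral J) {a..}"
    and "continuous_on {a<..} f" "continuous_on {a<..} g"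
    and less: "\<And>t. t > a \<Longrightarrow> f t < g t"
  shows "I < J"
proof -
  have diff: "((\<lambda>t. g t - f t) has_integral J - I) {a<..}"
    using has_integral_diff[OF assms(2,1)] by (simp add: has_integral_greaterThan_iff_atLeast)
  have cont: "continuous_on {a<..} (\<lambda>t. g t - f t)"
    using assms(3,4) by (intro continuous_intros)
  have "integral {a+1..a+2} (\<lambda>_. 0) < integral {a+1..a+2} (\<lambda>t. g t - f t)"
    using less by (intro integral_less_real continuous_on_subset[OF cont]) auto
  also have "\<dots> \<le> integral {a<..} (\<lambda>t. g t - f t)"
    using diff less cont
    by (intro integral_subset_le integrable_continuous_interval continuous_on_subset[OF cont])
       (auto simp: less_imp_le)
  also have "\<dots> = J - I"
    using diff by (rule integral_unique)
  finally show ?thesis by simp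
qed

lemma integrable_atLeast_of_dominated:
  fixes f g :: "real \<Rightarrow> real"
  assumes "continuous_on {a<..} f" "g integrable_on {a..}"
    and "\<And>t. t > a \<Longrightarrow> \<bar>f t\<bar> \<le> g t"
  shows "f integrable_on {a..}"
proof -
  have "f integrable_on {a<..}"
  proof (rule measurable_bounded_by_integrable_imp_integrable_real)
    show "f \<in> borel_measurable (lebesgue_on {a<..})"
      using assms(1) by (rule continuous_imp_measurable_on_sets_lebesgue) simp
    show "g integrable_on {a<..}"
      using assms(2) by (simp add: integrable_on_def has_integral_greaterThan_iff_atLeast)
  qed (use assms(3) in auto)
  then show ?thesis
    by (simp add: integrable_on_def has_integral_greaterThan_iff_atLeast)
qed

text \<open>Nonnegativity makes integrability and absolute integrability coincide, which is what the
  change of variables needs; when \<open>f\<close> is not integrable, both sides are the junk value 0.\<close>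

lemma integral_atLeast0_stretch:
  fixes f :: "real \<Rightarrow> real"
  assumes "c > 0" and nonneg: "\<And>t. t \<ge> 0 \<Longrightarrow> f t \<ge> 0"
  shows "integral {0..} (\<lambda>s. c * f (c * s)) = integral {0..} f"
proof -
  have image: "(\<lambda>s. c * s) ` {0..} = {0..}"
    using \<open>c > 0\<close> by (auto simp: image_iff intro!: bexI[of _ "t / c" for t])
  have change: "(\<lambda>s. \<bar>c\<bar> *\<^sub>R f (c * s)) absolutely_integrable_on {0..}
      \<and> integral {0..} (\<lambda>s. \<bar>c\<bar> *\<^sub>R f (c * s)) = b
      \<longleftrightarrow> f absolutely_integrable_on {0..} \<and> integral {0..} f = b" for b
  proof -
    have "((\<lambda>s. c * s) has_field_derivative c) (at s within {0..})" for s
      by (auto intro!: derivative_eq_intros)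
    moreover have "inj_on (\<lambda>s. c * s) {0..}"
      using \<open>c > 0\<close> by (auto intro: inj_onI)
    ultimately show ?thesis
      using has_absolute_integral_change_of_variables_real[of "{0..}" "\<lambda>s. c * s" "\<lambda>_. c" f b]
      unfolding image by simp
  qed
  show ?thesis
  proof (cases "f integrable_on {0..}")
    case True
    then show ?thesis
      using change[of "integral {0..} f"] nonneg nonnegative_absolutely_integrable_1 \<open>c > 0\<close> by auto
  next
    case False
    have "\<not> (\<lambda>s. c * f (c * s)) integrable_on {0..}"
    proof
      assume "(\<lambda>s. c * f (c * s)) integrable_on {0..}"
      then have "(\<lambda>s. c * f (c * s)) absolutely_integrable_on {0..}"
        using nonneg \<open>c > 0\<close> by (intro nonnegative_absolutely_integrable_1) auto
      then show False
        using change False \<open>c > 0\<close> set_lebesgue_integral_eq_integral(1) by fastforce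
    qed
    then show ?thesis using False by (metis not_integrable_integral)
  qed
qed

lemma has_integral_inverse_shifted_product:
  fixes \<alpha> \<beta> :: real
  assumes "\<alpha> > 0" "\<beta> > 0" "\<alpha> \<noteq> \<beta>"
  shows "((\<lambda>t. 1 / ((t + \<alpha>) * (t + \<beta>))) has_integral (ln \<beta> - ln \<alpha>) / (\<beta> - \<alpha>)) {0..}"
proof -
  define F where "F t = (ln (t + \<alpha>) - ln (t + \<beta>)) / (\<beta> - \<alpha>)" for t
  have "((\<lambda>t. 1 / ((t + \<alpha>) * (t + \<beta>))) has_integral 0 - F 0) {0..}"
  proof (rule fundamental_theorem_of_calculus_atLeast)
    show "continuous_on {0..b} F" for b
      unfolding F_def using assms by (intro continuous_intros) auto
    fix t :: real assume "t > 0"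
    have "(F has_real_derivative (1 / (t + \<alpha>) - 1 / (t + \<beta>)) / (\<beta> - \<alpha>)) (at t)"
      unfolding F_def using assms \<open>t > 0\<close> by (auto intro!: derivative_eq_intros)
    moreover have "(1 / (t + \<alpha>) - 1 / (t + \<beta>)) / (\<beta> - \<alpha>) = 1 / ((t + \<alpha>) * (t + \<beta>))"
      using assms \<open>t > 0\<close> by (simp add: divide_simps)
    ultimately show "(F has_real_derivative 1 / ((t + \<alpha>) * (t + \<beta>))) (at t)" by simp
  next
    have "((\<lambda>t. ln (t + \<alpha>) - ln (t + \<beta>)) \<longlongrightarrow> 0) at_top"
      by real_asymp
    then show "(F \<longlongrightarrow> 0) at_top"
      unfolding F_def by (rule tendsto_divide_zero)
  qed
  then show ?thesis by (simp add: F_def minus_divide_left)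
qed

lemma integrable_inverse_shifted_product:
  fixes \<alpha> \<beta> :: real
  assumes "\<alpha> > 0" "\<beta> > 0"
  shows "(\<lambda>t. 1 / ((t + \<alpha>) * (t + \<beta>))) integrable_on {0..}"
proof (rule integrable_atLeast_of_dominated)
  define m where "m = min \<alpha> \<beta>"
  have "m > 0" using assms by (simp add: m_def)
  show "(\<lambda>t. 1 / ((t + m) * (t + m / 2))) integrable_on {0..}"
    using has_integral_inverse_shifted_product[of m "m / 2"] \<open>m > 0\<close> by auto
  show "continuous_on {0<..} (\<lambda>t. 1 / ((t + \<alpha>) * (t + \<beta>)))"
    using assms by (intro continuous_intros) (auto simp: add_pos_pos)
  fix t :: real assume "t > 0"
  then show "\<bar>1 / ((t + \<alpha>) * (t + \<beta>))\<bar> \<le> 1 / ((t + m) * (t + m / 2))"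
    using assms \<open>m > 0\<close> by (auto simp: m_def intro!: divide_left_mono mult_mono)
qed

lemma has_integral_inverse_shift_pow_three_halves:
  fixes m :: real
  assumes "m > 0"
  shows "((\<lambda>t. 1 / (sqrt (t + m) * (t + m))) has_integral 2 / sqrt m) {0..}"
proof -
  define F where "F t = - 2 / sqrt (t + m)" for t
  have "((\<lambda>t. 1 / (sqrt (t + m) * (t + m))) has_integral 0 - F 0) {0..}"
  proof (rule fundamental_theorem_of_calculus_atLeast)
    show "continuous_on {0..b} F" for b
      unfolding F_def using assms by (intro continuous_intros) auto
    show "(F has_real_derivative 1 / (sqrt (t + m) * (t + m))) (at t)" if "t > 0" for t
      unfolding F_def using assms that
      by (auto intro!: derivative_eq_intros simp: field_simps)
    show "(F \<longlongrightarrow> 0) at_top"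
      unfolding F_def by real_asymp
  qed
  then show ?thesis by (simp add: F_def)
qed

lemma has_integral_inverse_sqrt_product_diff:
  fixes x y z :: real
  assumes "x \<ge> 0" "y \<ge> 0" "x \<noteq> 0 \<or> y \<noteq> 0" "z > 0"
  shows "((\<lambda>t. 1 / sqrt ((t + x) * (t + y)) - 1 / (sqrt (t + z) * (sqrt (t + z) + sqrt z)))
           has_integral 2 * ln (4 * sqrt z / (sqrt x + sqrt y))) {0..}"
proof -
  have sum_pos: "sqrt (t + x) + sqrt (t + y) > 0" "sqrt (t + z) + sqrt z > 0" if "t \<ge> 0" for t
    using assms that by (auto simp: add_pos_nonneg add_nonneg_pos)
  define F where
    "F t = 2 * ln (sqrt (t + x) + sqrt (t + y)) - 2 * ln (sqrt (t + z) + sqrt z)" for t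
  have "((\<lambda>t. 1 / sqrt ((t + x) * (t + y)) - 1 / (sqrt (t + z) * (sqrt (t + z) + sqrt z)))
           has_integral 2 * ln 2 - F 0) {0..}"
  proof (rule fundamental_theorem_of_calculus_atLeast)
    show "continuous_on {0..b} F" for b
      unfolding F_def using assms sum_pos
      by (intro continuous_intros) (auto simp: less_imp_neq[symmetric])
    show "(F has_real_derivative
            1 / sqrt ((t + x) * (t + y)) - 1 / (sqrt (t + z) * (sqrt (t + z) + sqrt z))) (at t)"
      if "t > 0" for t
    proof -
      have "sqrt (t + x) > 0" "sqrt (t + y) > 0" "sqrt (t + z) > 0"
        using assms that by auto
      then show ?thesis
        unfolding F_def real_sqrt_mult using sum_pos[of t] that
        by (auto intro!: derivative_eq_intros) (simp add: divide_simps; algebra)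
    qed
    show "(F \<longlongrightarrow> 2 * ln 2) at_top"
      unfolding F_def using assms by real_asymp
  qed
  moreover have "2 * ln 2 - F 0 = 2 * ln (4 * sqrt z / (sqrt x + sqrt y))"
    using assms sum_pos[of 0] ln_realpow[of 2 2] by (simp add: F_def ln_div ln_mult field_simps)
  ultimately show ?thesis by simp
qed

lemma integrable_R_C_integrand:
  fixes x y :: real
  assumes "x > 0" "y > 0"
  shows "(\<lambda>t. 1 / (sqrt (t + x) * (t + y))) integrable_on {0..}"
proof (rule integrable_atLeast_of_dominated)
  define m where "m = min x y"
  have "m > 0" using assms by (simp add: m_def)
  show "(\<lambda>t. 1 / (sqrt (t + m) * (t + m))) integrable_on {0..}"
    using has_integral_inverse_shift_pow_three_halves[OF \<open>m > 0\<close>] by auto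
  show "continuous_on {0<..} (\<lambda>t. 1 / (sqrt (t + x) * (t + y)))"
    using assms by (intro continuous_intros) (auto simp: add_pos_pos)
  fix t :: real assume "t > 0"
  then show "\<bar>1 / (sqrt (t + x) * (t + y))\<bar> \<le> 1 / (sqrt (t + m) * (t + m))"
    using assms \<open>m > 0\<close> by (auto simp: m_def intro!: divide_left_mono mult_mono)
qed

lemma R_C_scale:
  assumes "x \<ge> 0" "y \<ge> 0" "c > 0"
  shows "R_C (c * x) (c * y) = R_C x y / sqrt c"
proof -
  have "integral {0..} (\<lambda>t. 1 / (sqrt (t + c * x) * (t + c * y)))
      = integral {0..} (\<lambda>s. c * (1 / (sqrt (c * s + c * x) * (c * s + c * y))))"
    using assms by (intro integral_atLeast0_stretch[symmetric]) auto
  also have "\<dots> = integral {0..} (\<lambda>s. 1 / (sqrt (s + x) * (s + y)) * (1 / sqrt c))"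
  proof (intro integral_cong)
    fix s :: real
    have "sqrt (c * s + c * x) = sqrt c * sqrt (s + x)"
      by (simp flip: real_sqrt_mult add: distrib_left)
    moreover have "c * (1 / (sqrt c * A * (c * B))) = 1 / (A * B) * (1 / sqrt c)" for A B
      using assms by (simp add: divide_simps)
    ultimately show "c * (1 / (sqrt (c * s + c * x) * (c * s + c * y)))
        = 1 / (sqrt (s + x) * (s + y)) * (1 / sqrt c)"
      by (simp flip: distrib_left)
  qed
  finally show ?thesis
    unfolding R_C_def integral_mult_left by simp
qed

lemma sqrt_shifted_product_bounds:
  fixes x y t :: real
  assumes "x \<ge> 0" "y \<ge> 0" "t \<ge> 0"
  shows "t + sqrt (x * y) \<le> sqrt ((t + x) * (t + y))"
    and "sqrt ((t + x) * (t + y)) \<le> t + (x + y) / 2"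
proof -
  have "2 * sqrt (x * y) \<le> x + y"
    using arith_geo_mean_sqrt[of x y] assms by simp
  then have "t * (2 * sqrt (x * y)) \<le> t * (x + y)"
    using assms by (intro mult_left_mono) auto
  then show "t + sqrt (x * y) \<le> sqrt ((t + x) * (t + y))"
    using assms by (intro real_le_rsqrt) (simp add: power2_eq_square algebra_simps)
  have "0 \<le> (x - y)\<^sup>2" by simp
  then show "sqrt ((t + x) * (t + y)) \<le> t + (x + y) / 2"
    using assms by (intro real_le_lsqrt) (auto simp: power2_eq_square algebra_simps)
qed

lemma one_minus_half_mult_sqrt_less:
  fixes u :: real
  assumes "u > 0"
  shows "(1 - u / 2) * sqrt (1 + u) < 1"
proof (cases "u < 2")
  case True
  have "((1 - u / 2) * sqrt (1 + u))\<^sup>2 = 1 - u\<^sup>2 * (3 - u) / 4"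
    using assms by (simp add: power_mult_distrib power2_eq_square field_simps)
  also have "\<dots> < 1\<^sup>2"
    using assms True by simp
  finally show ?thesis
    by (rule power2_less_imp_less) simp
next
  case False
  then have "(1 - u / 2) * sqrt (1 + u) \<le> 0"
    using assms by (intro mult_nonpos_nonneg) auto
  then show ?thesis by simp
qed

lemma inverse_diff_sqrt_shifted_product_bounds:
  fixes x y t :: real
  assumes "x \<ge> 0" "y \<ge> 0" "x \<noteq> 0 \<or> y \<noteq> 0" "t > 0"
  defines "a \<equiv> (x + y) / 2" and "g \<equiv> sqrt (x * y)"
  shows "0 < 1 / t - 1 / sqrt ((t + x) * (t + y))"
    and "g / (t * (t + g)) \<le> 1 / t - 1 / sqrt ((t + x) * (t + y))"
    and "1 / t - 1 / sqrt ((t + x) * (t + y)) \<le> a / (t * (t + a))"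
proof -
  define S where "S = sqrt ((t + x) * (t + y))"
  have "g \<ge> 0" "a > 0" using assms by (auto simp: g_def a_def)
  have "t * (x + y) > 0" "x * y \<ge> 0" using assms by auto
  then have "t < S"
    unfolding S_def by (intro real_less_rsqrt) (simp add: power2_eq_square algebra_simps)
  then show "0 < 1 / t - 1 / sqrt ((t + x) * (t + y))"
    using assms by (simp add: S_def frac_less2)
  have "t + g \<le> S" "S \<le> t + a"
    using sqrt_shifted_product_bounds[of x y t] assms by (auto simp: S_def a_def g_def)
  then have "1 / t - 1 / (t + g) \<le> 1 / t - 1 / S" "1 / t - 1 / S \<le> 1 / t - 1 / (t + a)"
    using \<open>t > 0\<close> \<open>g \<ge> 0\<close> \<open>a > 0\<close> by (simp_all add: frac_le)
  moreover have "1 / t - 1 / (t + g) = g / (t * (t + g))" "1 / t - 1 / (t + a) = a / (t * (t + a))"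
    using \<open>t > 0\<close> \<open>g \<ge> 0\<close> \<open>a > 0\<close> by (simp_all add: field_simps)
  ultimately show "g / (t * (t + g)) \<le> 1 / t - 1 / sqrt ((t + x) * (t + y))"
    and "1 / t - 1 / sqrt ((t + x) * (t + y)) \<le> a / (t * (t + a))"
    by (simp_all add: S_def)
qed

lemma inverse_diff_sqrt_shift_bounds:
  fixes z p t :: real
  assumes "z > 0" "p > 0" "t > 0"
  shows "t / (sqrt z * p * (t + p)) < 1 / (sqrt z * p) - 1 / (sqrt (t + z) * (t + p))"
    and "1 / (sqrt z * p) - 1 / (sqrt (t + z) * (t + p))
           < t * (1 / p + 1 / (2 * z)) / (sqrt z * (t + p))"
proof -
  have "sqrt z > 0" "sqrt z < sqrt (t + z)" using assms by simp_all
  then have "1 / (sqrt (t + z) * (t + p)) < 1 / (sqrt z * (t + p))"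
    using assms by (intro divide_strict_left_mono mult_strict_right_mono) auto
  moreover have "1 / (r * p) - 1 / (r * (t + p)) = t / (r * p * (t + p))" if "r > 0" for r
    using assms that by (simp add: divide_simps)
  ultimately show "t / (sqrt z * p * (t + p)) < 1 / (sqrt z * p) - 1 / (sqrt (t + z) * (t + p))"
    using \<open>sqrt z > 0\<close> by fastforce
  have "sqrt (t + z) = sqrt z * sqrt (1 + t / z)"
    using assms by (simp flip: real_sqrt_mult add: field_simps)
  moreover have "(1 - t / (2 * z)) * sqrt (1 + t / z) < 1"
    using one_minus_half_mult_sqrt_less[of "t / z"] assms by (simp add: mult.commute)
  ultimately have "(1 - t / (2 * z)) * sqrt (t + z) < sqrt z"
    using \<open>sqrt z > 0\<close> by (simp add: mult.left_commute)
  moreover have "A / (r * (t + p)) < 1 / (w * (t + p))" if "A * w < r" "r > 0" "w > 0" for A r w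
    using that assms by (simp add: divide_simps mult.commute)
  ultimately have "(1 - t / (2 * z)) / (sqrt z * (t + p)) < 1 / (sqrt (t + z) * (t + p))"
    using \<open>sqrt z > 0\<close> assms by (metis real_sqrt_gt_0_iff add_pos_pos)
  moreover have "1 / (r * p) - t * (1 / p + 1 / (2 * z)) / (r * (t + p))
      = (1 - t / (2 * z)) / (r * (t + p))" if "r > 0" for r
    using assms that by (simp add: divide_simps; algebra)
  ultimately show "1 / (sqrt z * p) - 1 / (sqrt (t + z) * (t + p))
      < t * (1 / p + 1 / (2 * z)) / (sqrt z * (t + p))"
    using \<open>sqrt z > 0\<close> by fastforce
qed

lemma ln_div_mean_bounds:
  fixes x y p :: real
  assumes "x \<ge> 0" "y \<ge> 0" "x \<noteq> 0 \<or> y \<noteq> 0" "(x + y) / 2 < p"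
  defines "a \<equiv> (x + y) / 2" and "g \<equiv> sqrt (x * y)"
  shows "0 < ln (2 * p / (a + g))"
    and "ln p - ln a \<le> ln (2 * p / (a + g))"
    and "g > 0 \<Longrightarrow> ln (2 * p / (a + g)) \<le> ln p - ln g"
proof -
  have "g \<le> a"
    using arith_geo_mean_sqrt[of x y] assms by (simp add: a_def g_def)
  moreover have "a > 0" "g \<ge> 0" "a < p"
    using assms by (auto simp: a_def g_def)
  ultimately have L: "ln (2 * p / (a + g)) = ln p - ln ((a + g) / 2)"
    by (simp add: ln_div ln_mult)
  show "0 < ln (2 * p / (a + g))"
    using \<open>g \<le> a\<close> \<open>a > 0\<close> \<open>g \<ge> 0\<close> \<open>a < p\<close> by (intro ln_gt_zero) (simp add: field_simps)
  show "ln p - ln a \<le> ln (2 * p / (a + g))"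
    unfolding L using \<open>g \<le> a\<close> \<open>a > 0\<close> \<open>g \<ge> 0\<close> by simp
  show "ln (2 * p / (a + g)) \<le> ln p - ln g" if "g > 0"
    unfolding L using \<open>g \<le> a\<close> that by simp
qed

lemma R_J_integrand_split:
  fixes S w r t p :: real
  assumes "S > 0" "w > 0" "r > 0" "t > 0" "p > 0" "w\<^sup>2 = t + r\<^sup>2"
  shows "1 / (S * w * (t + p)) = (1 / t - 1 / S) * (1 / (r * p) - 1 / (w * (t + p)))
           + (1 / S - 1 / (w * (w + r))) / (r * p) - 1 / (w * (t + p)) / p"
  using assms by (simp add: divide_simps) algebra

text \<open>Only the values for \<open>t > 0\<close> matter: the point \<open>t = 0\<close>, where \<open>1 / t\<close> is the junk
  value 0, is negligible for the integral over \<open>{0..}\<close>.\<close>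

definition R_J_remainder :: "real \<Rightarrow> real \<Rightarrow> real \<Rightarrow> real \<Rightarrow> real \<Rightarrow> real" where
  "R_J_remainder x y z p t =
     (1 / t - 1 / sqrt ((t + x) * (t + y))) * (1 / (sqrt z * p) - 1 / (sqrt (t + z) * (t + p)))"

lemma R_J_remainder_bounds:
  fixes x y z p t :: real
  assumes "x \<ge> 0" "y \<ge> 0" "x \<noteq> 0 \<or> y \<noteq> 0" "z > 0" "p > 0" "t > 0"
  defines "a \<equiv> (x + y) / 2" and "g \<equiv> sqrt (x * y)"
  shows "g / (sqrt z * p * (t + g) * (t + p)) < R_J_remainder x y z p t"
    and "R_J_remainder x y z p t < a * (1 / p + 1 / (2 * z)) / (sqrt z * (t + a) * (t + p))"
proof -
  define \<alpha> where "\<alpha> = 1 / t - 1 / sqrt ((t + x) * (t + y))"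
  define \<beta> where "\<beta> = 1 / (sqrt z * p) - 1 / (sqrt (t + z) * (t + p))"
  have \<alpha>: "0 < \<alpha>" "g / (t * (t + g)) \<le> \<alpha>" "\<alpha> \<le> a / (t * (t + a))"
    using inverse_diff_sqrt_shifted_product_bounds[OF assms(1-3,6)]
    unfolding \<alpha>_def a_def g_def by auto
  have \<beta>: "t / (sqrt z * p * (t + p)) < \<beta>" "\<beta> < t * (1 / p + 1 / (2 * z)) / (sqrt z * (t + p))"
    using inverse_diff_sqrt_shift_bounds[OF assms(4-6)] unfolding \<beta>_def by auto
  have pos: "g \<ge> 0" "a > 0" "sqrt z > 0" "t / (sqrt z * p * (t + p)) > 0"
    using assms by (auto simp: a_def g_def)
  have "G / (r * p * (t + G) * (t + p)) = G / (t * (t + G)) * (t / (r * p * (t + p)))"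
    if "G \<ge> 0" "r > 0" for G r
    using that assms by (simp add: divide_simps; algebra)
  then have "g / (sqrt z * p * (t + g) * (t + p))
      = g / (t * (t + g)) * (t / (sqrt z * p * (t + p)))"
    using pos by blast
  also have "\<dots> \<le> \<alpha> * (t / (sqrt z * p * (t + p)))"
    using \<alpha>(2) pos by (intro mult_right_mono) auto
  also have "\<dots> < \<alpha> * \<beta>"
    using \<alpha>(1) \<beta>(1) by (rule mult_strict_left_mono[rotated])
  finally show "g / (sqrt z * p * (t + g) * (t + p)) < R_J_remainder x y z p t"
    by (simp add: R_J_remainder_def \<alpha>_def \<beta>_def)
  have "\<alpha> * \<beta> \<le> a / (t * (t + a)) * \<beta>"
    using \<alpha>(3) \<beta>(1) pos by (intro mult_right_mono) auto
  also have "\<dots> < a / (t * (t + a)) * (t * (1 / p + 1 / (2 * z)) / (sqrt z * (t + p)))"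
  proof (rule mult_strict_left_mono[OF \<beta>(2)])
    show "a / (t * (t + a)) > 0" using pos \<open>t > 0\<close> by simp
  qed
  also have "\<dots> = a * (1 / p + 1 / (2 * z)) / (sqrt z * (t + a) * (t + p))"
  proof -
    have "A / (t * (t + A)) * (t * c / (r * (t + p))) = A * c / (r * (t + A) * (t + p))"
      if "A > 0" "r > 0" for A r c
      using that assms by (simp add: divide_simps; algebra)
    then show ?thesis using pos by blast
  qed
  finally show "R_J_remainder x y z p t < a * (1 / p + 1 / (2 * z)) / (sqrt z * (t + a) * (t + p))"
    by (simp add: R_J_remainder_def \<alpha>_def \<beta>_def)
qed

lemma continuous_on_R_J_remainder:
  fixes x y z p :: real
  assumes "x \<ge> 0" "y \<ge> 0" "z > 0" "p > 0"
  shows "continuous_on {0<..} (R_J_remainder x y z p)"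
proof -
  have "sqrt ((t + x) * (t + y)) > 0" if "t > 0" for t
    using assms that by (auto intro: mult_pos_pos)
  then show ?thesis
    unfolding R_J_remainder_def using assms
    by (intro continuous_intros) (auto simp: less_imp_neq[symmetric])
qed

lemma integrable_R_J_remainder:
  fixes x y z p :: real
  assumes "x \<ge> 0" "y \<ge> 0" "x \<noteq> 0 \<or> y \<noteq> 0" "z > 0" "p > 0"
  shows "R_J_remainder x y z p integrable_on {0..}"
proof (rule integrable_atLeast_of_dominated)
  define a where "a = (x + y) / 2"
  define K where "K = a * (1 / p + 1 / (2 * z)) / sqrt z"
  have "a > 0" using assms by (auto simp: a_def)
  show "(\<lambda>t. K * (1 / ((t + a) * (t + p)))) integrable_on {0..}"
    using integrable_inverse_shifted_product[OF \<open>a > 0\<close> \<open>p > 0\<close>]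
    by (rule integrable_on_mult_right)
  show "continuous_on {0<..} (R_J_remainder x y z p)"
    using assms(1,2,4,5) by (rule continuous_on_R_J_remainder)
  fix t :: real assume "t > 0"
  note bounds = R_J_remainder_bounds[OF assms this]
  have "0 \<le> sqrt (x * y) / (sqrt z * p * (t + sqrt (x * y)) * (t + p))"
    using assms \<open>t > 0\<close> by simp
  then have "0 < R_J_remainder x y z p t"
    using bounds(1) by linarith
  moreover have "R_J_remainder x y z p t < K * (1 / ((t + a) * (t + p)))"
    using bounds(2) by (simp add: a_def K_def)
  ultimately show "\<bar>R_J_remainder x y z p t\<bar> \<le> K * (1 / ((t + a) * (t + p)))"
    by simp
qed

lemma ln_div_sqrt_sum:
  fixes x y z :: real
  assumes "x \<ge> 0" "y \<ge> 0" "x \<noteq> 0 \<or> y \<noteq> 0" "z > 0"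
  shows "2 * ln (4 * sqrt z / (sqrt x + sqrt y)) = ln (8 * z / ((x + y) / 2 + sqrt (x * y)))"
proof -
  have "sqrt x + sqrt y > 0"
    using assms by (auto simp: add_pos_nonneg add_nonneg_pos)
  have "(4 * sqrt z / (sqrt x + sqrt y))\<^sup>2 = 16 * z / (sqrt x + sqrt y)\<^sup>2"
    using assms by (simp add: power_divide power_mult_distrib)
  also have "(sqrt x + sqrt y)\<^sup>2 = 2 * ((x + y) / 2 + sqrt (x * y))"
    using assms by (simp add: power2_eq_square algebra_simps real_sqrt_mult)
  also have "16 * z / (2 * u) = 8 * z / u" for u :: real
    by simp
  finally have "ln ((4 * sqrt z / (sqrt x + sqrt y))\<^sup>2) = ln (8 * z / ((x + y) / 2 + sqrt (x * y)))"
    by simp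
  then show ?thesis
    using \<open>sqrt x + sqrt y > 0\<close> assms by (simp add: ln_realpow)
qed

lemma has_integral_R_J_integrand:
  fixes x y z p :: real
  assumes "x \<ge> 0" "y \<ge> 0" "x \<noteq> 0 \<or> y \<noteq> 0" "z > 0" "p > 0"
  shows "((\<lambda>t. 1 / (sqrt ((t + x) * (t + y) * (t + z)) * (t + p))) has_integral
           integral {0..} (R_J_remainder x y z p)
           + 2 * ln (4 * sqrt z / (sqrt x + sqrt y)) / (sqrt z * p) - 2 * R_C z p / p) {0..}"
proof -
  define Q where
    "Q = (\<lambda>t. 1 / sqrt ((t + x) * (t + y)) - 1 / (sqrt (t + z) * (sqrt (t + z) + sqrt z)))"
  define \<phi> where "\<phi> = (\<lambda>t. 1 / (sqrt (t + z) * (t + p)))"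
  have "(R_J_remainder x y z p has_integral integral {0..} (R_J_remainder x y z p)) {0..}"
    using integrable_R_J_remainder[OF assms] by (rule integrable_integral)
  moreover have "(Q has_integral 2 * ln (4 * sqrt z / (sqrt x + sqrt y))) {0..}"
    unfolding Q_def by (rule has_integral_inverse_sqrt_product_diff[OF assms(1-4)])
  moreover have "(\<phi> has_integral 2 * R_C z p) {0..}"
    using integrable_R_C_integrand[OF assms(4,5)] by (simp add: \<phi>_def R_C_def integrable_integral)
  ultimately have "((\<lambda>t. R_J_remainder x y z p t + Q t / (sqrt z * p) - \<phi> t / p) has_integral
      integral {0..} (R_J_remainder x y z p)
      + 2 * ln (4 * sqrt z / (sqrt x + sqrt y)) / (sqrt z * p) - 2 * R_C z p / p) {0..}"
    by (intro has_integral_diff has_integral_add has_integral_divide)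
  then show ?thesis
  proof (rule has_integral_spike[OF negligible_sing[of 0], rotated])
    fix t :: real assume "t \<in> {0..} - {0}"
    then have "t > 0" by auto
    have "sqrt ((t + x) * (t + y)) > 0" "sqrt (t + z) > 0" "(sqrt (t + z))\<^sup>2 = t + (sqrt z)\<^sup>2"
      using assms \<open>t > 0\<close> by (auto intro: mult_pos_pos)
    from R_J_integrand_split[OF this(1,2) _ \<open>t > 0\<close> \<open>p > 0\<close> this(3)]
    show "1 / (sqrt ((t + x) * (t + y) * (t + z)) * (t + p))
        = R_J_remainder x y z p t + Q t / (sqrt z * p) - \<phi> t / p"
      using assms by (simp add: R_J_remainder_def Q_def \<phi>_def real_sqrt_mult)
  qed
qed

lemma R_J_eq_remainder_integral:
  fixes x y z p :: real
  assumes "x \<ge> 0" "y \<ge> 0" "x \<noteq> 0 \<or> y \<noteq> 0" "z > 0" "p > 0"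
  shows "R_J x y z p = 3 / (2 * sqrt z * p) *
           (ln (8 * z / ((x + y) / 2 + sqrt (x * y))) - 2 * R_C 1 (p / z)
            + sqrt z * p * integral {0..} (R_J_remainder x y z p))"
proof -
  define E where "E = integral {0..} (R_J_remainder x y z p)"
  define l where "l = ln (8 * z / ((x + y) / 2 + sqrt (x * y)))"
  have RJ: "R_J x y z p = 3 / 2 * (E + l / (sqrt z * p) - 2 * R_C z p / p)"
    using has_integral_R_J_integrand[OF assms] ln_div_sqrt_sum[OF assms(1-4)]
    unfolding R_J_def E_def l_def by (simp add: integral_unique)
  have RC: "R_C 1 (p / z) = sqrt z * R_C z p"
    using R_C_scale[of 1 "p / z" z] assms by simp
  have alg: "3 / 2 * (E + l / (r * p) - 2 * C / p)
      = 3 / (2 * r * p) * (l - 2 * (r * C) + r * p * E)" if "r > 0" for r C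
    using that assms by (simp add: field_simps)
  show ?thesis
    unfolding RJ RC E_def[symmetric] l_def[symmetric] by (rule alg) (use assms in simp)
qed

lemma integral_R_J_remainder_less:
  fixes x y z p :: real
  assumes "x \<ge> 0" "y \<ge> 0" "x \<noteq> 0 \<or> y \<noteq> 0" "z > 0" "p > 0" "(x + y) / 2 < p"
  defines "a \<equiv> (x + y) / 2" and "g \<equiv> sqrt (x * y)"
  shows "integral {0..} (R_J_remainder x y z p)
           < a * (1 / p + 1 / (2 * z)) / sqrt z * (ln (2 * p / (a + g)) / (p - a))"
proof -
  define K where "K = a * (1 / p + 1 / (2 * z)) / sqrt z"
  have "a > 0" "a < p"
    using assms by (auto simp: a_def)
  then have "K > 0"
    unfolding K_def using assms(4,5) by (intro divide_pos_pos mult_pos_pos add_pos_pos) auto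
  have "(R_J_remainder x y z p has_integral integral {0..} (R_J_remainder x y z p)) {0..}"
    using integrable_R_J_remainder[OF assms(1-5)] by (rule integrable_integral)
  moreover have "((\<lambda>t. K * (1 / ((t + a) * (t + p))))
      has_integral K * ((ln p - ln a) / (p - a))) {0..}"
    using has_integral_inverse_shifted_product[of a p] \<open>a > 0\<close> \<open>a < p\<close>
    by (intro has_integral_mult_right) auto
  ultimately have "integral {0..} (R_J_remainder x y z p) < K * ((ln p - ln a) / (p - a))"
  proof (rule has_integral_less_atLeast[OF _ _ continuous_on_R_J_remainder[OF assms(1,2,4,5)]])
    show "continuous_on {0<..} (\<lambda>t. K * (1 / ((t + a) * (t + p))))"
      using \<open>a > 0\<close> \<open>p > 0\<close> by (intro continuous_intros) (auto simp: less_imp_neq[symmetric])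
    show "R_J_remainder x y z p t < K * (1 / ((t + a) * (t + p)))" if "t > 0" for t
      using R_J_remainder_bounds(2)[OF assms(1-5) that] by (simp add: K_def a_def)
  qed
  also have "\<dots> \<le> K * (ln (2 * p / (a + g)) / (p - a))"
    using ln_div_mean_bounds(2)[OF assms(1-3,6)] \<open>a < p\<close> \<open>K > 0\<close>
    by (intro mult_left_mono divide_right_mono) (auto simp: a_def g_def)
  finally show ?thesis
    by (simp add: K_def)
qed

lemma integral_R_J_remainder_greater:
  fixes x y z p :: real
  assumes "x \<ge> 0" "y \<ge> 0" "x \<noteq> 0 \<or> y \<noteq> 0" "z > 0" "p > 0" "(x + y) / 2 < p"
  defines "a \<equiv> (x + y) / 2" and "g \<equiv> sqrt (x * y)"
  shows "g * ln (2 * p / (a + g)) / (sqrt z * p * (p - g)) < integral {0..} (R_J_remainder x y z p)"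
proof -
  define E where "E = integral {0..} (R_J_remainder x y z p)"
  have E: "(R_J_remainder x y z p has_integral E) {0..}"
    using integrable_R_J_remainder[OF assms(1-5)] by (simp add: E_def integrable_integral)
  note cont = continuous_on_R_J_remainder[OF assms(1,2,4,5)]
  note lower = R_J_remainder_bounds(1)[OF assms(1-5), folded a_def g_def]
  have "g \<ge> 0" "g < p"
    using arith_geo_mean_sqrt[of x y] assms by (auto simp: a_def g_def)
  show ?thesis
  proof (cases "g = 0")
    case True
    have "((\<lambda>_. 0) has_integral 0) {0..}" by simp
    then have "0 < E"
      by (rule has_integral_less_atLeast[OF _ E continuous_on_const cont])
         (use lower True in simp)
    then show ?thesis using True by (simp add: E_def)
  next
    case False
    then have "g > 0" using \<open>g \<ge> 0\<close> by simp
    define c where "c = g / (sqrt z * p)"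
    have "c > 0" using \<open>g > 0\<close> assms by (simp add: c_def)
    have "((\<lambda>t. c * (1 / ((t + g) * (t + p)))) has_integral c * ((ln p - ln g) / (p - g))) {0..}"
      using has_integral_inverse_shifted_product[of g p] \<open>g > 0\<close> \<open>g < p\<close>
      by (intro has_integral_mult_right) auto
    then have "c * ((ln p - ln g) / (p - g)) < E"
    proof (rule has_integral_less_atLeast[OF _ E _ cont])
      show "continuous_on {0<..} (\<lambda>t. c * (1 / ((t + g) * (t + p))))"
        using \<open>g > 0\<close> \<open>p > 0\<close> by (intro continuous_intros) (auto simp: less_imp_neq[symmetric])
      show "c * (1 / ((t + g) * (t + p))) < R_J_remainder x y z p t" if "t > 0" for t
        using lower[OF that] by (simp add: c_def)
    qed
    moreover have "c * (ln (2 * p / (a + g)) / (p - g)) \<le> c * ((ln p - ln g) / (p - g))"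
      using ln_div_mean_bounds(3)[OF assms(1-3,6)] \<open>g > 0\<close> \<open>g < p\<close> \<open>c > 0\<close>
      by (intro mult_left_mono divide_right_mono) (auto simp: a_def g_def)
    ultimately show ?thesis
      by (simp add: E_def c_def)
  qed
qed

lemma R_J_remainder_integral_bounds:
  fixes x y z p :: real
  assumes "x \<ge> 0" "y \<ge> 0" "x \<noteq> 0 \<or> y \<noteq> 0" "z > 0" "p > 0" "(x + y) / 2 < p"
  defines "a \<equiv> (x + y) / 2" and "g \<equiv> sqrt (x * y)"
    and "L \<equiv> ln (2 * p / ((x + y) / 2 + sqrt (x * y)))"
  shows "g / (1 - g / p) < sqrt z * p\<^sup>2 * integral {0..} (R_J_remainder x y z p) / L"
    and "sqrt z * p\<^sup>2 * integral {0..} (R_J_remainder x y z p) / L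
           < a / (1 - a / p) * (1 + p / (2 * z))"
proof -
  define E where "E = integral {0..} (R_J_remainder x y z p)"
  define r where "r = sqrt z"
  have "L > 0"
    using ln_div_mean_bounds(1)[OF assms(1-3,6)] by (simp add: L_def)
  have "g \<le> a" "a < p" "r > 0"
    using arith_geo_mean_sqrt[of x y] assms by (auto simp: a_def g_def r_def)
  have "r * p\<^sup>2 * (g * L / (r * p * (p - g))) / L < r * p\<^sup>2 * E / L"
    using integral_R_J_remainder_greater[OF assms(1-6)] \<open>L > 0\<close> \<open>r > 0\<close> assms(5)
    by (intro divide_strict_right_mono mult_strict_left_mono)
       (auto simp: E_def r_def a_def g_def L_def)
  moreover have "r * p\<^sup>2 * (g * L / (r * p * (p - g))) / L = g / (1 - g / p)"
    using \<open>L > 0\<close> \<open>r > 0\<close> \<open>g \<le> a\<close> \<open>a < p\<close> assms(5) by (simp add: field_simps power2_eq_square)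
  ultimately show "g / (1 - g / p) < sqrt z * p\<^sup>2 * integral {0..} (R_J_remainder x y z p) / L"
    by (simp add: E_def r_def)
  have "r * p\<^sup>2 * E / L < r * p\<^sup>2 * (a * (1 / p + 1 / (2 * z)) / r * (L / (p - a))) / L"
    using integral_R_J_remainder_less[OF assms(1-6)] \<open>L > 0\<close> \<open>r > 0\<close> assms(5)
    by (intro divide_strict_right_mono mult_strict_left_mono)
       (auto simp: E_def r_def a_def g_def L_def)
  also have "\<dots> = a / (1 - a / p) * (1 + p / (2 * z))"
    using \<open>L > 0\<close> \<open>r > 0\<close> \<open>a < p\<close> assms(4,5) by (simp add: field_simps power2_eq_square)
  finally show "sqrt z * p\<^sup>2 * integral {0..} (R_J_remainder x y z p) / L
      < a / (1 - a / p) * (1 + p / (2 * z))"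
    by (simp add: E_def r_def)
qed

theorem mainTheorem12:
  fixes x y z p :: real
  assumes "x \<ge> 0" and "y \<ge> 0" and "x \<noteq> 0 \<or> y \<noteq> 0"
    and "z > 0" and "p > 0"
    and "(x + y) / 2 < p"
  shows "\<exists>\<theta>::real.
           sqrt (x * y) / (1 - sqrt (x * y) / p) < \<theta> \<and>
           \<theta> < ((x + y) / 2) / (1 - ((x + y) / 2) / p) * (1 + p / (2 * z)) \<and>
           R_J x y z p = 3 / (2 * sqrt z * p) *
             (ln (8 * z / ((x + y) / 2 + sqrt (x * y))) - 2 * R_C 1 (p / z)
              + \<theta> / p * ln (2 * p / ((x + y) / 2 + sqrt (x * y))))"
proof -
  define L where "L = ln (2 * p / ((x + y) / 2 + sqrt (x * y)))"
  define E where "E = integral {0..} (R_J_remainder x y z p)"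
  have "L > 0"
    unfolding L_def using ln_div_mean_bounds(1) assms(1-3,6) .
  then have "sqrt z * p\<^sup>2 * E / L / p * L = sqrt z * p * E"
    using assms(5) by (simp add: power2_eq_square)
  then show ?thesis
    using R_J_remainder_integral_bounds[OF assms] R_J_eq_remainder_integral[OF assms(1-5)]
    unfolding E_def[symmetric] L_def[symmetric]
    by (intro exI[of _ "sqrt z * p\<^sup>2 * E / L"]) simp
qed

end
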